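(* Let $n,g,k,t,u$ be positive integers. If there exist a large set of H-designs LH$(n,g,k,t)$ and an orthogonal array OA$(t,k,u)$, then there exists a large set of H-designs LH$(n,gu,k,t)$.
   Context: An H-design H$(n,g,k,t)$ is a triple $(Q,G,B)$ where $Q$ is a set of $ng$ points, $G$ is a partition of $Q$ into $n$ groups of size $g$, and $B$ is a set of $k$-subsets of $Q$ (blocks) such that each block meets each group in at most one point and any $t$ points from $t$ distinct groups lie in exactly one block. A large set of H-designs LH$(n,g,k,t)$ is a partition of the set of all $k$-subsets of $Q$ meeting each group of $G$ in at most one point into pairwise disjoint block sets, each of which forms (with $Q$ and $G$) an H-design H$(n,g,k,t)$. An orthogonal array OA$(t,k,u)$ is a $u^t\times k$ matrix with entries from $\mathbb{Z}_u$ such that in the submatrix formed by any $t$ columns each ordered $t$-tuple over $\mathbb{Z}_u$ occurs exactly once as a row. *)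

theory Defs
  imports Main
begin

definition group_structure :: "nat \<Rightarrow> nat \<Rightarrow> 'a set \<Rightarrow> 'a set set \<Rightarrow> bool" where
  "group_structure n g Q G \<longleftrightarrow>
     finite Q \<and> card Q = n * g \<and> \<Union>G = Q \<and> card G = n \<and>
     (\<forall>X\<in>G. card X = g) \<and>
     (\<forall>X\<in>G. \<forall>Y\<in>G. X \<noteq> Y \<longrightarrow> X \<inter> Y = {})"

definition transverse_sets :: "'a set \<Rightarrow> 'a set set \<Rightarrow> nat \<Rightarrow> 'a set set" where
  "transverse_sets Q G k = {S. S \<subseteq> Q \<and> card S = k \<and> (\<forall>X\<in>G. card (S \<inter> X) \<le> 1)}"

definition H_design :: "nat \<Rightarrow> nat \<Rightarrow> nat \<Rightarrow> nat \<Rightarrow> 'a set \<Rightarrow> 'a set set \<Rightarrow> 'a set set \<Rightarrow> bool" where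
  "H_design n g k t Q G B \<longleftrightarrow>
     group_structure n g Q G \<and>
     B \<subseteq> transverse_sets Q G k \<and>
     (\<forall>T \<in> transverse_sets Q G t. \<exists>!b. b \<in> B \<and> T \<subseteq> b)"

definition large_H_set :: "nat \<Rightarrow> nat \<Rightarrow> nat \<Rightarrow> nat \<Rightarrow> 'a set \<Rightarrow> 'a set set \<Rightarrow> 'a set set set \<Rightarrow> bool" where
  "large_H_set n g k t Q G L \<longleftrightarrow>
     group_structure n g Q G \<and>
     (\<forall>B\<in>L. H_design n g k t Q G B) \<and>
     (\<forall>B1\<in>L. \<forall>B2\<in>L. B1 \<noteq> B2 \<longrightarrow> B1 \<inter> B2 = {}) \<and>
     \<Union>L = transverse_sets Q G k"

definition orthogonal_array :: "nat \<Rightarrow> nat \<Rightarrow> nat \<Rightarrow> nat list list \<Rightarrow> bool" where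
  "orthogonal_array t k u M \<longleftrightarrow>
     length M = u ^ t \<and>
     (\<forall>r\<in>set M. length r = k \<and> (\<forall>x\<in>set r. x < u)) \<and>
     (\<forall>cs. length cs = t \<and> sorted_wrt (<) cs \<and> (\<forall>c\<in>set cs. c < k) \<longrightarrow>
        (\<forall>v. length v = t \<and> (\<forall>x\<in>set v. x < u) \<longrightarrow>
           card {i. i < length M \<and> map (\<lambda>c. M ! i ! c) cs = v} = 1))"

end

(*
  Replace every point x of Q by the u points (x, i), i < u, and every group X by X \<times> Z_u.
  A transverse k-set of the new point set is a transverse k-set b of Q together with a
  labelling of its points by Z_u, i.e. (after enumerating b) a vector of Z_u^k.
  The translates of the row set of an OA(t,k,u) by the vectors vanishing on the first t
  coordinates are again OAs, and they partition Z_u^k, because a row is determined by its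
  first t entries. For a block set B of the given large set and such a class C, the blocks
  b labelled by the rows of C form an H(n,gu,k,t): a transverse t-set T projects to a t-set
  lying in a unique b in B, and the labels of T prescribe t coordinates, which fix a unique
  row of C. Running over all pairs (B, C) partitions all transverse k-sets.
*)
theory Submission
  imports Defs "HOL-Library.Disjoint_Sets" "HOL-Library.Nat_Bijection" "HOL-Number_Theory.Cong"
begin

section \<open>Orthogonal arrays and their translates\<close>

definition tuples :: "nat \<Rightarrow> nat \<Rightarrow> nat list set" where
  "tuples k u = {a. length a = k \<and> set a \<subseteq> {..<u}}"

lemma tuples_nth_less: "a \<in> tuples k u \<Longrightarrow> i < k \<Longrightarrow> a ! i < u"
  unfolding tuples_def by (auto dest: nth_mem)

definition oa_rows :: "nat \<Rightarrow> nat \<Rightarrow> nat \<Rightarrow> nat list set \<Rightarrow> bool" where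
  "oa_rows t k u C \<longleftrightarrow> C \<subseteq> tuples k u \<and>
     (\<forall>D h. D \<subseteq> {..<k} \<and> card D = t \<and> (\<forall>i\<in>D. h i < u) \<longrightarrow>
        (\<exists>!a\<in>C. \<forall>i\<in>D. a ! i = h i))"

lemma oa_rowsD:
  assumes "oa_rows t k u C" "D \<subseteq> {..<k}" "card D = t" "\<forall>i\<in>D. h i < u"
  shows "\<exists>!a\<in>C. \<forall>i\<in>D. a ! i = h i"
  using assms unfolding oa_rows_def by blast

lemma orthogonal_array_oa_rows:
  assumes oa: "orthogonal_array t k u M"
  shows "oa_rows t k u (set M)"
  unfolding oa_rows_def
proof (intro conjI allI impI)
  show "set M \<subseteq> tuples k u"
    using oa unfolding orthogonal_array_def tuples_def by auto
  fix D h assume Dh: "D \<subseteq> {..<k} \<and> card D = t \<and> (\<forall>i\<in>D. h i < u)"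
  define cs where "cs = sorted_list_of_set D"
  have "finite D" using Dh by (meson finite_lessThan finite_subset)
  then have cs: "length cs = t" "sorted_wrt (<) cs" "set cs = D"
    using Dh by (auto simp: cs_def)
  have agree: "map (\<lambda>c. r ! c) cs = map h cs \<longleftrightarrow> (\<forall>i\<in>D. r ! i = h i)" for r :: "nat list"
    by (simp only: map_eq_conv cs(3))
  have "\<forall>c\<in>set cs. c < k" "length (map h cs) = t" "\<forall>x\<in>set (map h cs). x < u"
    using cs Dh by auto
  then have "card {j. j < length M \<and> map (\<lambda>c. M ! j ! c) cs = map h cs} = 1"
    using oa cs unfolding orthogonal_array_def by blast
  then obtain j where j: "{j. j < length M \<and> (\<forall>i\<in>D. M ! j ! i = h i)} = {j}"
    unfolding agree by (rule card_1_singletonE)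
  then have "j < length M" "\<forall>i\<in>D. M ! j ! i = h i" by auto
  show "\<exists>!r\<in>set M. \<forall>i\<in>D. r ! i = h i"
  proof (rule ex1I)
    show "M ! j \<in> set M \<and> (\<forall>i\<in>D. M ! j ! i = h i)"
      using \<open>j < length M\<close> \<open>\<forall>i\<in>D. M ! j ! i = h i\<close> by simp
    fix r assume "r \<in> set M \<and> (\<forall>i\<in>D. r ! i = h i)"
    then obtain j' where "j' < length M" "r = M ! j'" "\<forall>i\<in>D. M ! j' ! i = h i"
      by (auto simp: in_set_conv_nth)
    then have "j' \<in> {j. j < length M \<and> (\<forall>i\<in>D. M ! j ! i = h i)}" by simp
    then show "r = M ! j" using j \<open>r = M ! j'\<close> by simp
  qed
qed

lemma oa_rows_eq_if_prefix_eq: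
  assumes "oa_rows t k u C" "t \<le> k" "r1 \<in> C" "r2 \<in> C" "\<forall>i<t. r1 ! i = r2 ! i"
  shows "r1 = r2"
proof -
  have "\<forall>i\<in>{..<t}. r1 ! i < u"
    using assms(1-3) unfolding oa_rows_def by (auto intro: tuples_nth_less)
  then have "\<exists>!a\<in>C. \<forall>i\<in>{..<t}. a ! i = r1 ! i"
    using assms(1,2) by (intro oa_rowsD) auto
  then show ?thesis using assms(3-5) by auto
qed

lemma oa_rows_unique_on:
  assumes "oa_rows t k u C" "inj_on f T" "card T = t" "f ` T \<subseteq> {..<k}" "\<forall>p\<in>T. v p < u"
  shows "\<exists>!a\<in>C. \<forall>p\<in>T. a ! f p = v p"
proof -
  define h where "h i = v (the_inv_into T f i)" for i
  have h: "h (f p) = v p" if "p \<in> T" for p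
    using assms(2) that by (simp add: h_def the_inv_into_f_f)
  have "\<exists>!a\<in>C. \<forall>i\<in>f ` T. a ! i = h i"
    using assms by (intro oa_rowsD) (auto simp: card_image h)
  then show ?thesis by (simp add: h)
qed

lemma bij_betw_add_mod:
  assumes "0 < (u::nat)"
  shows "bij_betw (\<lambda>x. (z + x) mod u) {..<u} {..<u}"
proof -
  have inj: "inj_on (\<lambda>x. (z + x) mod u) {..<u}"
  proof (rule inj_onI)
    fix x y assume "x \<in> {..<u}" "y \<in> {..<u}" "(z + x) mod u = (z + y) mod u"
    then show "x = y"
      using cong_add_lcancel_nat[of z x y u] cong_less_modulus_unique_nat[of x y u]
      by (simp add: cong_def)
  qed
  moreover have "(\<lambda>x. (z + x) mod u) ` {..<u} = {..<u}"
    using assms by (intro endo_inj_surj inj) auto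
  ultimately show ?thesis by (simp add: bij_betw_def)
qed

text \<open>The solution \<open>x < u\<close> of \<open>(z + x) mod u = y\<close>; a junk value unless \<open>y < u\<close>.\<close>

definition diff_mod :: "nat \<Rightarrow> nat \<Rightarrow> nat \<Rightarrow> nat" where
  "diff_mod u y z = inv_into {..<u} (\<lambda>x. (z + x) mod u) y"

lemma diff_mod_less:
  assumes "0 < u" "y < u"
  shows "diff_mod u y z < u"
  using bij_betwE[OF bij_betw_inv_into[OF bij_betw_add_mod[OF assms(1), of z]]] assms(2)
  unfolding diff_mod_def by simp

lemma add_mod_eq_iff_diff_mod:
  assumes "0 < u" "x < u" "y < u"
  shows "(z + x) mod u = y \<longleftrightarrow> x = diff_mod u y z"
  using bij_betw_inv_into_left[OF bij_betw_add_mod[OF assms(1), of z], of x]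
    bij_betw_inv_into_right[OF bij_betw_add_mod[OF assms(1), of z], of y] assms(2,3)
  unfolding diff_mod_def by auto

definition translate :: "nat \<Rightarrow> nat list \<Rightarrow> nat list \<Rightarrow> nat list" where
  "translate u w r = map2 (\<lambda>y x. (y + x) mod u) w r"

lemma nth_translate:
  "i < length w \<Longrightarrow> i < length r \<Longrightarrow> translate u w r ! i = (w ! i + r ! i) mod u"
  by (simp add: translate_def)

lemma translate_in_tuples:
  "0 < u \<Longrightarrow> w \<in> tuples k u \<Longrightarrow> r \<in> tuples k u \<Longrightarrow> translate u w r \<in> tuples k u"
  by (auto simp: translate_def tuples_def set_zip)

lemma oa_rows_translate:
  assumes C: "oa_rows t k u C" and u: "0 < u" and w: "w \<in> tuples k u"
  shows "oa_rows t k u (translate u w ` C)"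
  unfolding oa_rows_def
proof (intro conjI allI impI)
  have C_tuples: "C \<subseteq> tuples k u" using C by (simp add: oa_rows_def)
  then show "translate u w ` C \<subseteq> tuples k u"
    using translate_in_tuples[OF u w] by blast
  fix D h assume Dh: "D \<subseteq> {..<k} \<and> card D = t \<and> (\<forall>i\<in>D. h i < u)"
  define h' where "h' i = diff_mod u (h i) (w ! i)" for i
  have "\<forall>i\<in>D. h' i < u" using Dh diff_mod_less[OF u] by (simp add: h'_def)
  then obtain r where r: "r \<in> C" "\<forall>i\<in>D. r ! i = h' i"
    and r_unique: "\<And>r'. r' \<in> C \<Longrightarrow> \<forall>i\<in>D. r' ! i = h' i \<Longrightarrow> r' = r"
    using oa_rowsD[OF C] Dh by metis
  have shift: "translate u w r' ! i = h i \<longleftrightarrow> r' ! i = h' i" if "r' \<in> C" "i \<in> D" for r' i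
  proof -
    have "i < k" using that Dh by auto
    have "r' \<in> tuples k u" using that C_tuples by blast
    then have "r' ! i < u" "length r' = k" "length w = k"
      using tuples_nth_less[OF _ \<open>i < k\<close>] w by (auto simp: tuples_def)
    moreover have "h i < u" using that Dh by blast
    ultimately show ?thesis
      using \<open>i < k\<close> by (simp add: nth_translate h'_def add_mod_eq_iff_diff_mod[OF u])
  qed
  show "\<exists>!a\<in>translate u w ` C. \<forall>i\<in>D. a ! i = h i"
  proof (rule ex1I)
    show "translate u w r \<in> translate u w ` C \<and> (\<forall>i\<in>D. translate u w r ! i = h i)"
      using r shift by blast
    fix a assume "a \<in> translate u w ` C \<and> (\<forall>i\<in>D. a ! i = h i)"
    then obtain r' where "r' \<in> C" "a = translate u w r'" "\<forall>i\<in>D. r' ! i = h' i"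
      using shift by blast
    then show "a = translate u w r" using r_unique by blast
  qed
qed

lemma tuple_in_translate:
  assumes C: "oa_rows t k u C" and "t \<le> k" "0 < u" and a: "a \<in> tuples k u"
  shows "\<exists>w\<in>tuples k u. (\<forall>i<t. w ! i = 0) \<and> a \<in> translate u w ` C"
proof -
  have "\<forall>i\<in>{..<t}. a ! i < u" using a \<open>t \<le> k\<close> by (auto intro: tuples_nth_less)
  then obtain r where r: "r \<in> C" "\<forall>i\<in>{..<t}. r ! i = a ! i"
    using oa_rowsD[OF C] \<open>t \<le> k\<close> by (metis card_lessThan lessThan_subset_iff)
  have "r \<in> tuples k u" using r(1) C by (auto simp: oa_rows_def)
  define w where "w = map (\<lambda>i. diff_mod u (a ! i) (r ! i)) [0..<k]"
  have less: "r ! i < u" "a ! i < u" "w ! i < u" if "i < k" for i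
    using that \<open>r \<in> tuples k u\<close> a diff_mod_less[OF \<open>0 < u\<close>]
    by (simp_all add: w_def tuples_nth_less)
  have "w ! i = 0" if "i < t" for i
  proof -
    have "i < k" using that \<open>t \<le> k\<close> by simp
    moreover have "(r ! i + 0) mod u = a ! i" using r(2) that less(1)[OF \<open>i < k\<close>] by simp
    ultimately show ?thesis
      using add_mod_eq_iff_diff_mod[OF \<open>0 < u\<close> \<open>0 < u\<close> less(2)[OF \<open>i < k\<close>], of "r ! i"]
      by (simp add: w_def)
  qed
  moreover have "w \<in> tuples k u"
    using less(3) by (auto simp: tuples_def w_def in_set_conv_nth)
  moreover have "translate u w r = a"
  proof (rule nth_equalityI)
    have "length w = k" "length r = k" "length a = k"
      using \<open>r \<in> tuples k u\<close> a by (simp_all add: w_def tuples_def)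
    then show "length (translate u w r) = length a" by (simp add: translate_def)
    fix i assume "i < length (translate u w r)"
    then have "i < k" using \<open>length w = k\<close> by (simp add: translate_def)
    then have "(r ! i + w ! i) mod u = a ! i"
      using add_mod_eq_iff_diff_mod[OF \<open>0 < u\<close> less(3) less(2)] by (simp add: w_def)
    then show "translate u w r ! i = a ! i"
      using \<open>i < k\<close> \<open>length w = k\<close> \<open>length r = k\<close> by (simp add: nth_translate add.commute)
  qed
  ultimately show ?thesis using r(1) by blast
qed

lemma translate_eq_imp_same_offset:
  assumes C: "oa_rows t k u C" and "t \<le> k" "0 < u"
    and w: "w1 \<in> tuples k u" "w2 \<in> tuples k u" "\<forall>i<t. w1 ! i = 0" "\<forall>i<t. w2 ! i = 0"
    and r: "r1 \<in> C" "r2 \<in> C" and eq: "translate u w1 r1 = translate u w2 r2"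
  shows "w1 = w2"
proof -
  have r_tuples: "r1 \<in> tuples k u" "r2 \<in> tuples k u" using r C by (auto simp: oa_rows_def)
  then have lengths: "length w1 = k" "length w2 = k" "length r1 = k" "length r2 = k"
    using w by (auto simp: tuples_def)
  have eq_nth: "(w1 ! i + r1 ! i) mod u = (w2 ! i + r2 ! i) mod u" if "i < k" for i
    using arg_cong[OF eq, of "\<lambda>a. a ! i"] that lengths by (simp add: nth_translate)
  have "r1 ! i = r2 ! i" if "i < t" for i
  proof -
    have "i < k" using that \<open>t \<le> k\<close> by simp
    then show ?thesis
      using eq_nth[of i] w(3,4) that tuples_nth_less[OF r_tuples(1)] tuples_nth_less[OF r_tuples(2)]
      by simp
  qed
  then have "r1 = r2" using oa_rows_eq_if_prefix_eq[OF C \<open>t \<le> k\<close> r] by blast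
  show ?thesis
  proof (rule nth_equalityI)
    show "length w1 = length w2" using lengths by simp
    fix i assume "i < length w1"
    then have "i < k" using lengths by simp
    define y where "y = (r1 ! i + w1 ! i) mod u"
    have "y < u" using \<open>0 < u\<close> by (simp add: y_def)
    have "(r1 ! i + w2 ! i) mod u = y"
      using eq_nth[OF \<open>i < k\<close>] \<open>r1 = r2\<close> by (simp add: y_def add.commute)
    moreover have "w1 ! i < u" "w2 ! i < u" using w(1,2) \<open>i < k\<close> by (simp_all add: tuples_nth_less)
    ultimately show "w1 ! i = w2 ! i"
      using add_mod_eq_iff_diff_mod[OF \<open>0 < u\<close> \<open>w1 ! i < u\<close> \<open>y < u\<close>, of "r1 ! i"]
        add_mod_eq_iff_diff_mod[OF \<open>0 < u\<close> \<open>w2 ! i < u\<close> \<open>y < u\<close>, of "r1 ! i"]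
      by (simp add: y_def)
  qed
qed

definition oa_translates :: "nat \<Rightarrow> nat \<Rightarrow> nat \<Rightarrow> nat list set \<Rightarrow> nat list set set" where
  "oa_translates t k u C = (\<lambda>w. translate u w ` C) ` {w \<in> tuples k u. \<forall>i<t. w ! i = 0}"

lemma oa_translates_partition:
  assumes C: "oa_rows t k u C" and "t \<le> k" "0 < u"
  shows "partition_on (tuples k u) (oa_translates t k u C)"
  unfolding oa_translates_def
proof (rule partition_onI)
  have "C \<subseteq> tuples k u" using C by (simp add: oa_rows_def)
  then show "\<Union> ((\<lambda>w. translate u w ` C) ` {w \<in> tuples k u. \<forall>i<t. w ! i = 0}) = tuples k u"
    using tuple_in_translate[OF assms] translate_in_tuples[OF \<open>0 < u\<close>] by blast
  show "disjnt p q"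
    if "p \<in> (\<lambda>w. translate u w ` C) ` {w \<in> tuples k u. \<forall>i<t. w ! i = 0}"
      and "q \<in> (\<lambda>w. translate u w ` C) ` {w \<in> tuples k u. \<forall>i<t. w ! i = 0}"
      and "p \<noteq> q" for p q
    using that translate_eq_imp_same_offset[OF assms] unfolding disjnt_def by blast
  have "\<exists>!a\<in>C. \<forall>i\<in>{..<t}. a ! i = 0"
    using oa_rowsD[OF C] \<open>t \<le> k\<close> \<open>0 < u\<close> by simp
  then show "{} \<notin> (\<lambda>w. translate u w ` C) ` {w \<in> tuples k u. \<forall>i<t. w ! i = 0}"
    by blast
qed

lemma oa_rows_oa_translates:
  assumes "oa_rows t k u C" "0 < u" "C' \<in> oa_translates t k u C"
  shows "oa_rows t k u C'"
  using assms oa_rows_translate unfolding oa_translates_def by blast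

lemma orthogonal_array_partition:
  assumes M: "orthogonal_array t k u M" and "0 < u"
  shows "\<exists>CC. partition_on (tuples k u) CC \<and> (\<forall>C\<in>CC. oa_rows t k u C)"
proof (cases "t \<le> k")
  case True
  have C: "oa_rows t k u (set M)" using orthogonal_array_oa_rows[OF M] .
  show ?thesis
    using oa_translates_partition[OF C True \<open>0 < u\<close>] oa_rows_oa_translates[OF C \<open>0 < u\<close>]
    by blast
next
  case False
  then have "oa_rows t k u (tuples k u)"
    unfolding oa_rows_def by (metis card_lessThan card_mono finite_lessThan le_trans nle_le subset_refl)
  moreover have "replicate k 0 \<in> tuples k u" using \<open>0 < u\<close> by (auto simp: tuples_def)
  ultimately show ?thesis using partition_on_space[of "tuples k u"] by blast
qed

section \<open>Inflating the point set\<close>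

definition inflate_groups :: "nat \<Rightarrow> 'a set set \<Rightarrow> ('a \<times> nat) set set" where
  "inflate_groups u G = (\<lambda>X. X \<times> {..<u}) ` G"

lemma group_structure_inflate:
  assumes gs: "group_structure n g Q G" and "0 < u"
  shows "group_structure n (g * u) (Q \<times> {..<u}) (inflate_groups u G)"
proof -
  have inj: "inj_on (\<lambda>X. X \<times> {..<u}) G"
    using \<open>0 < u\<close> by (intro inj_onI) (metis fst_image_times lessThan_iff empty_iff)
  have "finite Q" "card Q = n * g" "\<Union>G = Q" "card G = n" "\<forall>X\<in>G. card X = g"
    and disj: "\<forall>X\<in>G. \<forall>Y\<in>G. X \<noteq> Y \<longrightarrow> X \<inter> Y = {}"
    using gs unfolding group_structure_def by auto
  moreover have "\<forall>X\<in>G. \<forall>Y\<in>G. X \<times> {..<u} \<noteq> Y \<times> {..<u} \<longrightarrow> X \<times> {..<u} \<inter> Y \<times> {..<u} = {}"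
    using disj by blast
  moreover have "(\<Union>X\<in>G. X \<times> {..<u}) = Q \<times> {..<u}" using \<open>\<Union>G = Q\<close> by blast
  ultimately show ?thesis
    using card_image[OF inj] unfolding group_structure_def inflate_groups_def
    by (simp add: card_cartesian_product)
qed

lemma transverse_sets_inflate_fst:
  assumes gs: "group_structure n g Q G"
    and S: "S \<in> transverse_sets (Q \<times> {..<u}) (inflate_groups u G) m"
  shows "inj_on fst S" "fst ` S \<in> transverse_sets Q G m"
proof -
  have SQ: "S \<subseteq> Q \<times> {..<u}" and "card S = m"
    and meet: "\<forall>X\<in>G. card (S \<inter> X \<times> {..<u}) \<le> 1"
    using S unfolding transverse_sets_def inflate_groups_def by auto
  have "finite Q" "\<Union>G = Q" using gs unfolding group_structure_def by auto
  then have "finite S" using SQ by (simp add: finite_subset)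
  show inj: "inj_on fst S"
  proof (rule inj_onI)
    fix p q assume pq: "p \<in> S" "q \<in> S" "fst p = fst q"
    then have "fst p \<in> Q" using SQ by (auto simp: mem_Times_iff)
    then obtain X where "X \<in> G" "fst p \<in> X" using \<open>\<Union>G = Q\<close> by blast
    then have mem: "p \<in> S \<inter> X \<times> {..<u}" "q \<in> S \<inter> X \<times> {..<u}"
      using pq SQ by (auto simp: mem_Times_iff)
    have fin: "finite (S \<inter> X \<times> {..<u})" using \<open>finite S\<close> by simp
    have "card (S \<inter> X \<times> {..<u}) \<le> Suc 0" using meet \<open>X \<in> G\<close> by simp
    then have "\<forall>a1\<in>S \<inter> X \<times> {..<u}. \<forall>a2\<in>S \<inter> X \<times> {..<u}. a1 = a2"
      unfolding card_le_Suc0_iff_eq[OF fin] .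
    then show "p = q" using mem by blast
  qed
  have "card (fst ` S \<inter> X) \<le> 1" if "X \<in> G" for X
  proof -
    have "fst ` S \<inter> X = fst ` (S \<inter> X \<times> {..<u})" using SQ by (auto simp: mem_Times_iff)
    then have "card (fst ` S \<inter> X) \<le> card (S \<inter> X \<times> {..<u})"
      using card_image_le[of "S \<inter> X \<times> {..<u}" fst] \<open>finite S\<close> by simp
    then show ?thesis using meet that by (meson le_trans)
  qed
  then show "fst ` S \<in> transverse_sets Q G m"
    using SQ card_image[OF inj] \<open>card S = m\<close> unfolding transverse_sets_def by auto
qed

lemma transverse_set_finite_card:
  assumes "group_structure n g Q G" "b \<in> transverse_sets Q G k"
  shows "finite b" "card b = k"
  using finite_subset[of b Q] assms unfolding group_structure_def transverse_sets_def by auto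

text \<open>An arbitrary enumeration of the points of a block, which turns \<open>k\<close>-tuples into labellings.\<close>

definition point_index :: "'a set \<Rightarrow> 'a \<Rightarrow> nat" where
  "point_index b = (SOME f. bij_betw f b {..<card b})"

lemma bij_betw_point_index:
  assumes "finite b"
  shows "bij_betw (point_index b) b {..<card b}"
proof -
  have "\<exists>f. bij_betw f b {..<card b}" using assms by (simp add: bij_betw_iff_card)
  then show ?thesis unfolding point_index_def by (rule someI_ex)
qed

definition labelled_block :: "'a set \<Rightarrow> nat list \<Rightarrow> ('a \<times> nat) set" where
  "labelled_block b a = (\<lambda>x. (x, a ! point_index b x)) ` b"

lemma fst_labelled_block [simp]: "fst ` labelled_block b a = b"
  unfolding labelled_block_def by (simp add: image_image)

lemma subset_labelled_block_iff:
  "T \<subseteq> labelled_block b a \<longleftrightarrow> fst ` T \<subseteq> b \<and> (\<forall>p\<in>T. a ! point_index b (fst p) = snd p)"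
  unfolding labelled_block_def by (auto simp: subset_iff image_iff; force)

lemma labelled_block_eq_iff:
  assumes "finite b1" "length a1 = card b1" "length a2 = card b2"
  shows "labelled_block b1 a1 = labelled_block b2 a2 \<longleftrightarrow> b1 = b2 \<and> a1 = a2"
proof
  assume eq: "labelled_block b1 a1 = labelled_block b2 a2"
  then have "b1 = b2" by (metis fst_labelled_block)
  moreover have "a1 = a2"
  proof (rule nth_equalityI)
    show "length a1 = length a2" using assms \<open>b1 = b2\<close> by simp
    fix i assume "i < length a1"
    then obtain x where x: "x \<in> b1" "point_index b1 x = i"
      using bij_betw_point_index[OF \<open>finite b1\<close>] assms(2) by (metis bij_betw_def imageE lessThan_iff)
    then have "(x, a1 ! i) \<in> labelled_block b1 a2"
      using eq \<open>b1 = b2\<close> unfolding labelled_block_def by auto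
    then show "a1 ! i = a2 ! i" using x unfolding labelled_block_def by auto
  qed
  ultimately show "b1 = b2 \<and> a1 = a2" ..
qed simp

lemma labelled_block_transverse:
  assumes gs: "group_structure n g Q G"
    and b: "b \<in> transverse_sets Q G k" and a: "a \<in> tuples k u"
  shows "labelled_block b a \<in> transverse_sets (Q \<times> {..<u}) (inflate_groups u G) k"
proof -
  have "b \<subseteq> Q" "card b = k" and meet: "\<forall>X\<in>G. card (b \<inter> X) \<le> 1"
    using b unfolding transverse_sets_def by auto
  have "finite b" using transverse_set_finite_card(1)[OF gs b] .
  have index: "point_index b x < k" if "x \<in> b" for x
    using bij_betwE[OF bij_betw_point_index[OF \<open>finite b\<close>]] that \<open>card b = k\<close> by auto
  let ?f = "\<lambda>x. (x, a ! point_index b x)"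
  have inj: "inj_on ?f b" by (auto simp: inj_on_def)
  have "labelled_block b a \<subseteq> Q \<times> {..<u}"
    using \<open>b \<subseteq> Q\<close> index tuples_nth_less[OF a] unfolding labelled_block_def by auto
  moreover have "card (labelled_block b a) = k"
    using card_image[OF inj] \<open>card b = k\<close> unfolding labelled_block_def by simp
  moreover have "card (labelled_block b a \<inter> X \<times> {..<u}) \<le> 1" if "X \<in> G" for X
  proof -
    have "labelled_block b a \<inter> X \<times> {..<u} \<subseteq> ?f ` (b \<inter> X)"
      unfolding labelled_block_def by auto
    then have "card (labelled_block b a \<inter> X \<times> {..<u}) \<le> card (?f ` (b \<inter> X))"
      using \<open>finite b\<close> by (intro card_mono) auto
    also have "\<dots> \<le> card (b \<inter> X)" using card_image_le[of "b \<inter> X" ?f] \<open>finite b\<close> by simp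
    finally show ?thesis using meet that by (meson le_trans)
  qed
  ultimately show ?thesis unfolding transverse_sets_def inflate_groups_def by blast
qed

lemma transverse_sets_inflate_labelled:
  assumes gs: "group_structure n g Q G"
    and S: "S \<in> transverse_sets (Q \<times> {..<u}) (inflate_groups u G) k"
  shows "\<exists>a\<in>tuples k u. S = labelled_block (fst ` S) a"
proof -
  define b where "b = fst ` S"
  have inj: "inj_on fst S" and "b \<in> transverse_sets Q G k"
    using transverse_sets_inflate_fst[OF gs S] unfolding b_def by auto
  then have "finite b" "card b = k" using transverse_set_finite_card[OF gs] by blast+
  then have index: "bij_betw (point_index b) b {..<k}"
    using bij_betw_point_index by blast
  have SQ: "S \<subseteq> Q \<times> {..<u}" using S unfolding transverse_sets_def by simp
  define label where "label x = snd (the_inv_into S fst x)" for x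
  have label: "(x, label x) \<in> S" if x: "x \<in> b" for x
  proof -
    obtain p where "p \<in> S" "x = fst p" using x unfolding b_def by blast
    then show ?thesis using the_inv_into_f_f[OF inj \<open>p \<in> S\<close>] by (simp add: label_def)
  qed
  define a where "a = map (\<lambda>i. label (inv_into b (point_index b) i)) [0..<k]"
  have a_index: "a ! point_index b x = label x" if "x \<in> b" for x
    using that bij_betwE[OF index] bij_betw_inv_into_left[OF index] by (simp add: a_def)
  have "inv_into b (point_index b) i \<in> b" if "i < k" for i
    using bij_betwE[OF bij_betw_inv_into[OF index]] that by simp
  then have "a \<in> tuples k u"
    using label SQ unfolding a_def tuples_def by fastforce
  moreover have "S = labelled_block b a"
  proof
    show "labelled_block b a \<subseteq> S" unfolding labelled_block_def using a_index label by auto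
    have "snd p = label (fst p)" if "p \<in> S" for p
    proof -
      have "p = (fst p, label (fst p))"
        using inj_onD[OF inj, of p "(fst p, label (fst p))"] label that unfolding b_def by auto
      then show ?thesis by (metis snd_conv)
    qed
    then show "S \<subseteq> labelled_block b a"
      unfolding subset_labelled_block_iff b_def using a_index b_def by auto
  qed
  ultimately show ?thesis unfolding b_def by blast
qed

definition labelled_design :: "'a set set \<Rightarrow> nat list set \<Rightarrow> ('a \<times> nat) set set" where
  "labelled_design B C = (\<lambda>(b, a). labelled_block b a) ` (B \<times> C)"

lemma labelled_design_mono: "B \<subseteq> B' \<Longrightarrow> C \<subseteq> C' \<Longrightarrow> labelled_design B C \<subseteq> labelled_design B' C'"
  unfolding labelled_design_def by (intro image_mono Sigma_mono)

lemma Union_labelled_design: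
  "\<Union> ((\<lambda>(B, C). labelled_design B C) ` (L \<times> CC)) = labelled_design (\<Union>L) (\<Union>CC)"
  unfolding labelled_design_def by auto

lemma transverse_sets_inflate:
  assumes gs: "group_structure n g Q G"
  shows "transverse_sets (Q \<times> {..<u}) (inflate_groups u G) k
           = labelled_design (transverse_sets Q G k) (tuples k u)"
proof
  show "labelled_design (transverse_sets Q G k) (tuples k u)
          \<subseteq> transverse_sets (Q \<times> {..<u}) (inflate_groups u G) k"
    using labelled_block_transverse[OF gs] unfolding labelled_design_def by auto
  show "transverse_sets (Q \<times> {..<u}) (inflate_groups u G) k
          \<subseteq> labelled_design (transverse_sets Q G k) (tuples k u)"
  proof
    fix S assume S: "S \<in> transverse_sets (Q \<times> {..<u}) (inflate_groups u G) k"
    obtain a where "a \<in> tuples k u" "S = labelled_block (fst ` S) a"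
      using transverse_sets_inflate_labelled[OF gs S] by blast
    moreover have "fst ` S \<in> transverse_sets Q G k" using transverse_sets_inflate_fst(2)[OF gs S] .
    ultimately show "S \<in> labelled_design (transverse_sets Q G k) (tuples k u)"
      unfolding labelled_design_def by (intro image_eqI[where x = "(fst ` S, a)"]) auto
  qed
qed

lemma disjoint_labelled_designs:
  assumes L: "disjoint L" "\<forall>b\<in>\<Union>L. finite b \<and> card b = k"
    and CC: "disjoint CC" "\<forall>a\<in>\<Union>CC. length a = k"
  shows "disjoint ((\<lambda>(B, C). labelled_design B C) ` (L \<times> CC))"
proof (rule disjointI)
  fix D1 D2
  assume D: "D1 \<in> (\<lambda>(B, C). labelled_design B C) ` (L \<times> CC)"
    "D2 \<in> (\<lambda>(B, C). labelled_design B C) ` (L \<times> CC)" "D1 \<noteq> D2"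
  then obtain B1 C1 B2 C2 where BC: "B1 \<in> L" "C1 \<in> CC" "B2 \<in> L" "C2 \<in> CC"
    and D_eq: "D1 = labelled_design B1 C1" "D2 = labelled_design B2 C2"
    by auto
  show "D1 \<inter> D2 = {}"
  proof (rule ccontr)
    assume "D1 \<inter> D2 \<noteq> {}"
    then obtain b1 a1 b2 a2 where ba: "b1 \<in> B1" "a1 \<in> C1" "b2 \<in> B2" "a2 \<in> C2"
      and eq: "labelled_block b1 a1 = labelled_block b2 a2"
      unfolding D_eq labelled_design_def by auto
    have "finite b1" "card b1 = k" "card b2 = k" "length a1 = k" "length a2 = k"
      using L(2) CC(2) ba BC by auto
    then have "b1 = b2" "a1 = a2" using eq labelled_block_eq_iff by metis+
    then have "B1 = B2" "C1 = C2"
      using disjointD[OF L(1)] disjointD[OF CC(1)] BC ba by blast+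
    then show False using D(3) D_eq by simp
  qed
qed

lemma oa_rows_unique_labelled_block:
  assumes C: "oa_rows t k u C" and b: "finite b" "card b = k"
    and T: "inj_on fst T" "fst ` T \<subseteq> b" "card T = t" "\<forall>p\<in>T. snd p < u"
  shows "\<exists>!a\<in>C. T \<subseteq> labelled_block b a"
proof -
  have index: "bij_betw (point_index b) b {..<k}" using bij_betw_point_index b by blast
  have "inj_on (\<lambda>p. point_index b (fst p)) T"
    using comp_inj_on[OF T(1) inj_on_subset[OF bij_betw_imp_inj_on[OF index] T(2)]]
    by (simp add: comp_def)
  moreover have "(\<lambda>p. point_index b (fst p)) ` T \<subseteq> {..<k}"
    using bij_betwE[OF index] T(2) by auto
  ultimately have "\<exists>!a\<in>C. \<forall>p\<in>T. a ! point_index b (fst p) = snd p"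
    using oa_rows_unique_on[OF C _ T(3) _ T(4)] by blast
  then show ?thesis using T(2) by (simp add: subset_labelled_block_iff)
qed

lemma H_design_labelled:
  assumes HD: "H_design n g k t Q G B" and "0 < u" and C: "oa_rows t k u C"
  shows "H_design n (g * u) k t (Q \<times> {..<u}) (inflate_groups u G) (labelled_design B C)"
  unfolding H_design_def
proof (intro conjI ballI)
  have gs: "group_structure n g Q G" and B: "B \<subseteq> transverse_sets Q G k"
    and unique: "\<forall>T\<in>transverse_sets Q G t. \<exists>!b. b \<in> B \<and> T \<subseteq> b"
    using HD unfolding H_design_def by auto
  show "group_structure n (g * u) (Q \<times> {..<u}) (inflate_groups u G)"
    using group_structure_inflate[OF gs \<open>0 < u\<close>] .
  have "C \<subseteq> tuples k u" using C by (simp add: oa_rows_def)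
  then show "labelled_design B C \<subseteq> transverse_sets (Q \<times> {..<u}) (inflate_groups u G) k"
    unfolding transverse_sets_inflate[OF gs] using B by (rule labelled_design_mono[rotated])
  fix T assume T: "T \<in> transverse_sets (Q \<times> {..<u}) (inflate_groups u G) t"
  then have "card T = t" "\<forall>p\<in>T. snd p < u" unfolding transverse_sets_def by auto
  have inj: "inj_on fst T" and T0: "fst ` T \<in> transverse_sets Q G t"
    using transverse_sets_inflate_fst[OF gs T] by auto
  obtain b where b: "b \<in> B \<and> fst ` T \<subseteq> b"
    and b_unique: "\<forall>b'. b' \<in> B \<and> fst ` T \<subseteq> b' \<longrightarrow> b' = b"
    using bspec[OF unique T0] by (rule ex1E)
  have "b \<in> transverse_sets Q G k" using b B by blast
  then have "finite b" "card b = k" using transverse_set_finite_card[OF gs] by blast+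
  moreover have "fst ` T \<subseteq> b" using b by blast
  ultimately have "\<exists>!a\<in>C. T \<subseteq> labelled_block b a"
    using oa_rows_unique_labelled_block[OF C _ _ inj _ \<open>card T = t\<close> \<open>\<forall>p\<in>T. snd p < u\<close>]
    by blast
  then obtain a where a: "a \<in> C" "T \<subseteq> labelled_block b a"
    and a_unique: "\<And>a'. a' \<in> C \<Longrightarrow> T \<subseteq> labelled_block b a' \<Longrightarrow> a' = a"
    by blast
  show "\<exists>!S. S \<in> labelled_design B C \<and> T \<subseteq> S"
  proof (rule ex1I)
    show "labelled_block b a \<in> labelled_design B C \<and> T \<subseteq> labelled_block b a"
      unfolding labelled_design_def using a b by auto
    fix S assume S: "S \<in> labelled_design B C \<and> T \<subseteq> S"
    then obtain b' a' where "b' \<in> B" "a' \<in> C" and S_eq: "S = labelled_block b' a'"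
      unfolding labelled_design_def by auto
    have "fst ` T \<subseteq> fst ` S" using S by (intro image_mono) simp
    then have "b' = b" using b_unique \<open>b' \<in> B\<close> S_eq by simp
    then show "S = labelled_block b a" using a_unique \<open>a' \<in> C\<close> S S_eq by blast
  qed
qed

lemma large_H_set_inflate:
  assumes LH: "large_H_set n g k t Q G L" and "0 < u"
    and CC: "partition_on (tuples k u) CC" "\<forall>C\<in>CC. oa_rows t k u C"
  shows "large_H_set n (g * u) k t (Q \<times> {..<u}) (inflate_groups u G)
           ((\<lambda>(B, C). labelled_design B C) ` (L \<times> CC))"
  unfolding large_H_set_def
proof (intro conjI ballI impI)
  have gs: "group_structure n g Q G" and designs: "\<forall>B\<in>L. H_design n g k t Q G B"
    and "\<forall>B1\<in>L. \<forall>B2\<in>L. B1 \<noteq> B2 \<longrightarrow> B1 \<inter> B2 = {}"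
    and L_union: "\<Union>L = transverse_sets Q G k"
    using LH unfolding large_H_set_def by auto
  then have "disjoint L" by (simp add: disjoint_def)
  show "group_structure n (g * u) (Q \<times> {..<u}) (inflate_groups u G)"
    using group_structure_inflate[OF gs \<open>0 < u\<close>] .
  show "H_design n (g * u) k t (Q \<times> {..<u}) (inflate_groups u G) D"
    if D: "D \<in> (\<lambda>(B, C). labelled_design B C) ` (L \<times> CC)" for D
  proof -
    obtain B C where "B \<in> L" "C \<in> CC" "D = labelled_design B C" using D by auto
    then show ?thesis
      using H_design_labelled[OF bspec[OF designs] \<open>0 < u\<close> bspec[OF CC(2)]] by simp
  qed
  have "\<forall>b\<in>\<Union>L. finite b \<and> card b = k"
    unfolding L_union using transverse_set_finite_card[OF gs] by blast
  moreover have "\<forall>a\<in>\<Union>CC. length a = k"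
    unfolding partition_onD1[OF CC(1), symmetric] tuples_def by blast
  ultimately have disj: "disjoint ((\<lambda>(B, C). labelled_design B C) ` (L \<times> CC))"
    using disjoint_labelled_designs[OF \<open>disjoint L\<close> _ partition_onD2[OF CC(1)]] by blast
  show "D1 \<inter> D2 = {}"
    if "D1 \<in> (\<lambda>(B, C). labelled_design B C) ` (L \<times> CC)"
      "D2 \<in> (\<lambda>(B, C). labelled_design B C) ` (L \<times> CC)" "D1 \<noteq> D2" for D1 D2
    using disjointD[OF disj that] .
  show "\<Union> ((\<lambda>(B, C). labelled_design B C) ` (L \<times> CC))
          = transverse_sets (Q \<times> {..<u}) (inflate_groups u G) k"
    unfolding Union_labelled_design transverse_sets_inflate[OF gs] L_union
      partition_onD1[OF CC(1), symmetric] ..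
qed

section \<open>Transport along injections\<close>

lemma transverse_sets_image:
  assumes f: "inj f"
  shows "transverse_sets (f ` Q) ((`) f ` G) m = (`) f ` transverse_sets Q G m"
proof
  have "f ` S \<in> transverse_sets (f ` Q) ((`) f ` G) m" if "S \<in> transverse_sets Q G m" for S
    using that unfolding transverse_sets_def
    by (auto simp: card_image inj_on_subset[OF f] image_Int[OF f, symmetric])
  then show "(`) f ` transverse_sets Q G m \<subseteq> transverse_sets (f ` Q) ((`) f ` G) m" by blast
  show "transverse_sets (f ` Q) ((`) f ` G) m \<subseteq> (`) f ` transverse_sets Q G m"
  proof
    fix S' assume S': "S' \<in> transverse_sets (f ` Q) ((`) f ` G) m"
    then obtain S where S: "S \<subseteq> Q" "S' = f ` S"
      unfolding transverse_sets_def by (auto simp: subset_image_iff)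
    have "S \<in> transverse_sets Q G m" using S' S unfolding transverse_sets_def
      by (auto simp: card_image inj_on_subset[OF f] image_Int[OF f, symmetric])
    then show "S' \<in> (`) f ` transverse_sets Q G m" using S by blast
  qed
qed

lemma group_structure_image:
  assumes f: "inj f" and gs: "group_structure n g Q G"
  shows "group_structure n g (f ` Q) ((`) f ` G)"
proof -
  have inj_image: "inj ((`) f)" using f by (simp add: inj_def inj_image_eq_iff)
  have "finite Q" "card Q = n * g" "\<Union>G = Q" "card G = n" "\<forall>X\<in>G. card X = g"
    and disj: "\<forall>X\<in>G. \<forall>Y\<in>G. X \<noteq> Y \<longrightarrow> X \<inter> Y = {}"
    using gs unfolding group_structure_def by auto
  moreover have "f ` X \<inter> f ` Y = {}" if "X \<in> G" "Y \<in> G" "f ` X \<noteq> f ` Y" for X Y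
    using disj that image_Int[OF f, of X Y] by (metis image_empty)
  ultimately show ?thesis
    unfolding group_structure_def
    by (auto simp: card_image inj_on_subset[OF f] inj_on_subset[OF inj_image])
qed

lemma H_design_image:
  assumes f: "inj f" and HD: "H_design n g k t Q G B"
  shows "H_design n g k t (f ` Q) ((`) f ` G) ((`) f ` B)"
  unfolding H_design_def
proof (intro conjI ballI)
  have gs: "group_structure n g Q G" and B: "B \<subseteq> transverse_sets Q G k"
    and unique: "\<forall>T\<in>transverse_sets Q G t. \<exists>!b. b \<in> B \<and> T \<subseteq> b"
    using HD unfolding H_design_def by auto
  show "group_structure n g (f ` Q) ((`) f ` G)" using group_structure_image[OF f gs] .
  show "(`) f ` B \<subseteq> transverse_sets (f ` Q) ((`) f ` G) k"
    using B unfolding transverse_sets_image[OF f] by auto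
  fix T' assume "T' \<in> transverse_sets (f ` Q) ((`) f ` G) t"
  then obtain T where T: "T \<in> transverse_sets Q G t" "T' = f ` T"
    unfolding transverse_sets_image[OF f] by auto
  obtain b where b: "b \<in> B \<and> T \<subseteq> b" and b_unique: "\<forall>b'. b' \<in> B \<and> T \<subseteq> b' \<longrightarrow> b' = b"
    using bspec[OF unique T(1)] by (rule ex1E)
  show "\<exists>!b'. b' \<in> (`) f ` B \<and> T' \<subseteq> b'"
  proof (rule ex1I)
    show "f ` b \<in> (`) f ` B \<and> T' \<subseteq> f ` b" using b T(2) by auto
    fix b' assume "b' \<in> (`) f ` B \<and> T' \<subseteq> b'"
    then obtain b1 where "b1 \<in> B" "b' = f ` b1" "f ` T \<subseteq> f ` b1" using T(2) by auto
    then show "b' = f ` b" using b_unique inj_image_subset_iff[OF f] by metis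
  qed
qed

lemma large_H_set_image:
  assumes f: "inj f" and LH: "large_H_set n g k t Q G L"
  shows "large_H_set n g k t (f ` Q) ((`) f ` G) ((`) ((`) f) ` L)"
  unfolding large_H_set_def
proof (intro conjI ballI impI)
  have inj_image: "inj ((`) f)" using f by (simp add: inj_def inj_image_eq_iff)
  have gs: "group_structure n g Q G" and designs: "\<forall>B\<in>L. H_design n g k t Q G B"
    and L_disj: "\<forall>B1\<in>L. \<forall>B2\<in>L. B1 \<noteq> B2 \<longrightarrow> B1 \<inter> B2 = {}"
    and L_union: "\<Union>L = transverse_sets Q G k"
    using LH unfolding large_H_set_def by auto
  show "group_structure n g (f ` Q) ((`) f ` G)" using group_structure_image[OF f gs] .
  show "H_design n g k t (f ` Q) ((`) f ` G) B'" if "B' \<in> (`) ((`) f) ` L" for B'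
    using that designs H_design_image[OF f] by auto
  show "B1 \<inter> B2 = {}"
    if B: "B1 \<in> (`) ((`) f) ` L" "B2 \<in> (`) ((`) f) ` L" "B1 \<noteq> B2" for B1 B2
  proof -
    obtain C1 C2 where "C1 \<in> L" "C2 \<in> L" "B1 = (`) f ` C1" "B2 = (`) f ` C2" "C1 \<noteq> C2"
      using B by auto
    then show ?thesis using L_disj image_Int[OF inj_image, of C1 C2] by (metis image_empty)
  qed
  show "\<Union> ((`) ((`) f) ` L) = transverse_sets (f ` Q) ((`) f ` G) k"
    unfolding transverse_sets_image[OF f] L_union[symmetric] by blast
qed

theorem theorem4:
  fixes n g k t u :: nat
  assumes "n > 0" "g > 0" "k > 0" "t > 0" "u > 0"
    and "\<exists>(Q::nat set) G L. large_H_set n g k t Q G L"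
    and "\<exists>M. orthogonal_array t k u M"
  shows "\<exists>(Q::nat set) G L. large_H_set n (g * u) k t Q G L"
proof -
  obtain Q :: "nat set" and G L where LH: "large_H_set n g k t Q G L" using assms(6) by blast
  obtain M where "orthogonal_array t k u M" using assms(7) by blast
  then obtain CC where "partition_on (tuples k u) CC" "\<forall>C\<in>CC. oa_rows t k u C"
    using orthogonal_array_partition \<open>u > 0\<close> by blast
  from large_H_set_inflate[OF LH \<open>u > 0\<close> this]
  have "large_H_set n (g * u) k t (Q \<times> {..<u}) (inflate_groups u G)
          ((\<lambda>(B, C). labelled_design B C) ` (L \<times> CC))" .
  from large_H_set_image[OF inj_prod_encode this] show ?thesis by blast
qed

end
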